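(* Suppose that $\alpha_1$ and $\alpha_2$ are the roots of an irreducible quadratic polynomial in $\mathbb{Q}[x]$ such that $0 < \alpha_1 < 1 < \alpha_2$. Then the additive monoid $M_{\alpha_1} = \{f(\alpha_1) \mid f(x) \in \mathbb{N}_0[x,x^{-1}]\}$ is an FFM and, therefore, satisfies the ACCP.
   Context: $\mathbb{N}_0[x,x^{-1}]$ denotes the semiring of Laurent polynomials with coefficients in $\mathbb{N}_0$. A reduced additive monoid $M$ is an FFM (finite factorization monoid) if it is atomic and every nonzero element has only finitely many factorizations (formal sums of atoms, up to order, adding to it), where atoms are nonzero elements not expressible as a sum of two nonzero elements. $M$ satisfies the ACCP if every ascending chain of principal ideals $x_1 + M \subseteq x_2 + M \subseteq \cdots$ eventually stabilizes. *)

theory Defs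
  imports Complex_Main "HOL-Computational_Algebra.Polynomial" "HOL-Library.Multiset"
begin

definition laurent_monoid :: "real \<Rightarrow> real set" where
  "laurent_monoid \<alpha> =
     {(\<Sum>k\<in>K. of_nat (c k) * \<alpha> powi k) | K c. finite (K :: int set)}"

definition atoms :: "real set \<Rightarrow> real set" where
  "atoms M = {a \<in> M. a \<noteq> 0 \<and>
     \<not> (\<exists>b c. b \<in> M \<and> c \<in> M \<and> b \<noteq> 0 \<and> c \<noteq> 0 \<and> a = b + c)}"

definition factorizations :: "real set \<Rightarrow> real \<Rightarrow> real multiset set" where
  "factorizations M x = {F. set_mset F \<subseteq> atoms M \<and> sum_mset F = x}"

definition atomic_monoid :: "real set \<Rightarrow> bool" where
  "atomic_monoid M \<longleftrightarrow> (\<forall>x\<in>M. x \<noteq> 0 \<longrightarrow> factorizations M x \<noteq> {})"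

definition FFM :: "real set \<Rightarrow> bool" where
  "FFM M \<longleftrightarrow> atomic_monoid M \<and> (\<forall>x\<in>M. x \<noteq> 0 \<longrightarrow> finite (factorizations M x))"

definition principal_ideal :: "real set \<Rightarrow> real \<Rightarrow> real set" where
  "principal_ideal M x = (\<lambda>m. x + m) ` M"

definition ACCP :: "real set \<Rightarrow> bool" where
  "ACCP M \<longleftrightarrow> (\<forall>s :: nat \<Rightarrow> real.
     (\<forall>n. s n \<in> M) \<and> (\<forall>n. principal_ideal M (s n) \<subseteq> principal_ideal M (s (Suc n)))
     \<longrightarrow> (\<exists>N. \<forall>n\<ge>N. principal_ideal M (s n) = principal_ideal M (s N)))"

end

theory Submission
  imports Defs "HOL-Computational_Algebra.Polynomial_Factorial" "HOL-Computational_Algebra.Field_as_Ring"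
begin

text \<open>
  Write \<sigma> for the conjugation f(\<alpha>1) \<mapsto> f(\<alpha>2) on the monoid. It is well defined because a
  rational Laurent polynomial vanishing at \<alpha>1 becomes, after multiplication by a power of x, a
  polynomial divisible by the irreducible p, so it also vanishes at \<alpha>2; only irreducibility of p
  is used, not its degree. The weight x + \<sigma> x is additive, and a monomial c x^k contributes
  c (\<alpha>1^k + \<alpha>2^k) \<ge> c, since one of the two powers is at least 1. For the same reason, elements
  of weight at most T involve only finitely many exponents and bounded coefficients, so there are
  finitely many of them.

  Any additive monoid of reals with such a weight is an FFM: every factor of x has weight at most
  that of x, and a factorization of x has at most weight(x) atoms. It satisfies the ACCP because the
  integer part of the weight strictly decreases at every proper step of an ascending chain of
  principal ideals.
\<close>

locale weighted_real_monoid =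
  fixes M :: "real set" and weight :: "real \<Rightarrow> real"
  assumes zero_mem: "0 \<in> M"
    and add_mem: "\<lbrakk>x \<in> M; y \<in> M\<rbrakk> \<Longrightarrow> x + y \<in> M"
    and weight_add: "\<lbrakk>x \<in> M; y \<in> M\<rbrakk> \<Longrightarrow> weight (x + y) = weight x + weight y"
    and one_le_weight: "\<lbrakk>x \<in> M; x \<noteq> 0\<rbrakk> \<Longrightarrow> 1 \<le> weight x"
    and finite_weight_le: "finite {x \<in> M. weight x \<le> T}"
begin

lemma weight_zero: "weight 0 = 0"
  using weight_add[OF zero_mem zero_mem] by simp

lemma weight_nonneg: "x \<in> M \<Longrightarrow> 0 \<le> weight x"
  using one_le_weight[of x] by (cases "x = 0") (auto simp: weight_zero)

lemma weight_le_add: "\<lbrakk>x \<in> M; y \<in> M\<rbrakk> \<Longrightarrow> weight x \<le> weight (x + y)"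
  using weight_add weight_nonneg by fastforce

lemma sum_mset_mem: "set_mset F \<subseteq> M \<Longrightarrow> sum_mset F \<in> M"
  by (induction F) (auto simp: zero_mem add_mem)

lemma weight_sum_mset: "set_mset F \<subseteq> M \<Longrightarrow> weight (sum_mset F) = (\<Sum>a\<in>#F. weight a)"
  by (induction F) (auto simp: weight_zero weight_add sum_mset_mem)

lemma size_le_weight_sum_mset:
  assumes "set_mset F \<subseteq> M - {0}"
  shows "real (size F) \<le> weight (sum_mset F)"
proof -
  have "real (size F) = (\<Sum>a\<in>#F. 1)"
    by (induction F) auto
  also have "\<dots> \<le> (\<Sum>a\<in>#F. weight a)"
    using assms one_le_weight by (intro sum_mset_mono) auto
  finally show ?thesis
    using assms by (subst weight_sum_mset) auto
qed

lemma atomic: "atomic_monoid M"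
  unfolding atomic_monoid_def factorizations_def
proof (intro ballI impI)
  fix x assume "x \<in> M" "x \<noteq> 0"
  then show "{F. set_mset F \<subseteq> atoms M \<and> sum_mset F = x} \<noteq> {}"
  proof (induction "nat \<lfloor>weight x\<rfloor>" arbitrary: x rule: less_induct)
    case less
    show ?case
    proof (cases "x \<in> atoms M")
      case True
      then have "{#x#} \<in> {F. set_mset F \<subseteq> atoms M \<and> sum_mset F = x}"
        by simp
      then show ?thesis
        by blast
    next
      case False
      then obtain y z where yz: "y \<in> M" "z \<in> M" "y \<noteq> 0" "z \<noteq> 0" "x = y + z"
        using less.prems unfolding atoms_def by blast
      then have "1 \<le> weight y" "1 \<le> weight z" "weight x = weight y + weight z"
        using one_le_weight weight_add by auto
      then have "nat \<lfloor>weight y\<rfloor> < nat \<lfloor>weight x\<rfloor>" "nat \<lfloor>weight z\<rfloor> < nat \<lfloor>weight x\<rfloor>"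
        by linarith+
      then obtain G H where "set_mset G \<subseteq> atoms M" "sum_mset G = y"
          "set_mset H \<subseteq> atoms M" "sum_mset H = z"
        using less.hyps yz by blast
      then have "G + H \<in> {F. set_mset F \<subseteq> atoms M \<and> sum_mset F = x}"
        using yz by auto
      then show ?thesis
        by blast
    qed
  qed
qed

lemma finite_factorizations:
  assumes "x \<in> M"
  shows "finite (factorizations M x)"
proof -
  define A where "A = {a \<in> M. weight a \<le> weight x}"
  have "factorizations M x \<subseteq> (\<Union>n\<le>nat \<lfloor>weight x\<rfloor>. multisets_of_size A n)"
  proof
    fix F assume "F \<in> factorizations M x"
    then have F: "set_mset F \<subseteq> M - {0}" "sum_mset F = x"
      unfolding factorizations_def atoms_def by auto
    have "set_mset F \<subseteq> A"
    proof
      fix a assume a: "a \<in># F"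
      have "a \<in> M" "sum_mset (F - {#a#}) \<in> M"
        using F(1) a by (auto intro: sum_mset_mem dest: in_diffD)
      moreover have "x = a + sum_mset (F - {#a#})"
        using sum_mset.remove[OF a] F(2) by simp
      ultimately show "a \<in> A"
        unfolding A_def using weight_le_add by auto
    qed
    moreover have "size F \<le> nat \<lfloor>weight x\<rfloor>"
      using size_le_weight_sum_mset[OF F(1)] F(2) by (simp add: le_nat_floor)
    ultimately show "F \<in> (\<Union>n\<le>nat \<lfloor>weight x\<rfloor>. multisets_of_size A n)"
      unfolding multisets_of_size_def by auto
  qed
  moreover have "finite A"
    unfolding A_def by (rule finite_weight_le)
  ultimately show ?thesis
    by (meson finite_UN_I finite_atMost finite_multisets_of_size finite_subset)
qed

theorem FFM: "FFM M"
  unfolding FFM_def using atomic finite_factorizations by blast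

lemma principal_ideal_subsetD:
  assumes "principal_ideal M x \<subseteq> principal_ideal M y"
  obtains m where "m \<in> M" "x = y + m"
proof -
  have "x \<in> principal_ideal M x"
    unfolding principal_ideal_def using zero_mem by force
  then show ?thesis
    using assms that unfolding principal_ideal_def by auto
qed

theorem ACCP: "ACCP M"
  unfolding ACCP_def
proof (intro allI impI)
  fix s :: "nat \<Rightarrow> real"
  assume "(\<forall>n. s n \<in> M) \<and> (\<forall>n. principal_ideal M (s n) \<subseteq> principal_ideal M (s (Suc n)))"
  then have s: "s n \<in> M" "principal_ideal M (s n) \<subseteq> principal_ideal M (s (Suc n))" for n
    by auto
  define f where "f n = nat \<lfloor>weight (s n)\<rfloor>" for n
  have strict_descent: "f (Suc n) < f n" if "s (Suc n) \<noteq> s n" for n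
  proof -
    obtain m where "m \<in> M" "s n = s (Suc n) + m"
      using principal_ideal_subsetD[OF s(2)] .
    moreover have "m \<noteq> 0"
      using that calculation by auto
    ultimately have "weight (s (Suc n)) + 1 \<le> weight (s n)"
      using weight_add one_le_weight s(1) by fastforce
    then show ?thesis
      unfolding f_def using weight_nonneg[OF s(1)[of "Suc n"]] by linarith
  qed
  obtain N where N: "\<And>n. f N \<le> f n"
    using ex_has_least_nat[of "\<lambda>_. True" 0 f] by auto
  have "s n = s N" if "N \<le> n" for n
    using that
  proof (induction n rule: dec_induct)
    case (step n)
    then have "f n = f N"
      unfolding f_def by simp
    then show ?case
      using step.IH strict_descent[of n] N[of "Suc n"] by fastforce
  qed simp
  then show "\<exists>N. \<forall>n\<ge>N. principal_ideal M (s n) = principal_ideal M (s N)"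
    by metis
qed

end

lemma map_poly_of_rat_add:
  "map_poly (of_rat :: rat \<Rightarrow> 'a::field_char_0) (p + q) = map_poly of_rat p + map_poly of_rat q"
  by (rule poly_eqI) (simp add: coeff_map_poly of_rat_add)

lemma map_poly_of_rat_mult:
  "map_poly (of_rat :: rat \<Rightarrow> 'a::field_char_0) (p * q) = map_poly of_rat p * map_poly of_rat q"
  by (rule poly_eqI) (simp add: coeff_mult coeff_map_poly of_rat_sum of_rat_mult)

lemma map_poly_of_rat_sum:
  "finite A \<Longrightarrow>
    map_poly (of_rat :: rat \<Rightarrow> 'a::field_char_0) (\<Sum>k\<in>A. f k) = (\<Sum>k\<in>A. map_poly of_rat (f k))"
  by (induction A rule: finite_induct) (auto simp: map_poly_of_rat_add)

lemma irreducible_dvd_of_common_root: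
  fixes p q :: "rat poly" and \<alpha> :: "'a::field_char_0"
  assumes "irreducible p" "poly (map_poly of_rat p) \<alpha> = 0" "poly (map_poly of_rat q) \<alpha> = 0"
  shows "p dvd q"
proof (rule ccontr)
  assume "\<not> p dvd q"
  with assms(1) have "gcd p q = 1"
    by (simp add: field_poly_irreducible_imp_prime prime_elem_imp_coprime)
  then have "fst (bezout_coefficients p q) * p + snd (bezout_coefficients p q) * q = 1"
    by (metis bezout_coefficients_fst_snd)
  then have "poly (map_poly of_rat (fst (bezout_coefficients p q) * p + snd (bezout_coefficients p q) * q)) \<alpha> = 1"
    by simp
  then show False
    using assms(2,3) by (simp add: map_poly_of_rat_add map_poly_of_rat_mult)
qed

lemma laurent_vanishes_at_conjugate_root:
  fixes p :: "rat poly" and \<alpha> \<beta> :: "'a::field_char_0" and e :: "int \<Rightarrow> rat"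
  assumes "irreducible p" "poly (map_poly of_rat p) \<alpha> = 0" "poly (map_poly of_rat p) \<beta> = 0"
    and "\<alpha> \<noteq> 0" "\<beta> \<noteq> 0" "finite L"
    and "(\<Sum>k\<in>L. of_rat (e k) * \<alpha> powi k) = 0"
  shows "(\<Sum>k\<in>L. of_rat (e k) * \<beta> powi k) = 0"
proof -
  define N where "N = (\<Sum>k\<in>L. nat \<bar>k\<bar>)"
  define q where "q = (\<Sum>k\<in>L. monom (e k) (nat (k + int N)))"
  have exponent_nonneg: "0 \<le> k + int N" if "k \<in> L" for k
    using member_le_sum[of k L "\<lambda>k. nat \<bar>k\<bar>"] that \<open>finite L\<close> unfolding N_def by linarith
  have poly_q: "poly (map_poly of_rat q) x = x ^ N * (\<Sum>k\<in>L. of_rat (e k) * x powi k)"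
    if "x \<noteq> 0" for x :: 'a
  proof -
    have "poly (map_poly of_rat q) x = (\<Sum>k\<in>L. of_rat (e k) * x powi (k + int N))"
      unfolding q_def using \<open>finite L\<close> exponent_nonneg
      by (simp add: map_poly_of_rat_sum map_poly_monom poly_sum poly_monom power_int_def)
    also have "\<dots> = x ^ N * (\<Sum>k\<in>L. of_rat (e k) * x powi k)"
      using that by (simp add: power_int_add sum_distrib_left mult_ac)
    finally show ?thesis .
  qed
  have "p dvd q"
    using irreducible_dvd_of_common_root[OF assms(1,2)] poly_q[OF assms(4)] assms(7) by simp
  then have "poly (map_poly of_rat q) \<beta> = 0"
    using assms(3) by (auto simp: map_poly_of_rat_mult)
  then show ?thesis
    using poly_q[OF assms(5)] assms(5) by simp
qed

definition laurent_eval :: "int set \<Rightarrow> (int \<Rightarrow> nat) \<Rightarrow> real \<Rightarrow> real" where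
  "laurent_eval K c x = (\<Sum>k\<in>K. of_nat (c k) * x powi k)"

definition joint_laurent_values :: "real \<Rightarrow> real \<Rightarrow> (real \<times> real) set" where
  "joint_laurent_values \<alpha> \<beta> = {(laurent_eval K c \<alpha>, laurent_eval K c \<beta>) | K c. finite K}"

lemma laurent_monoid_eq_fst_joint_laurent_values:
  "laurent_monoid \<alpha> = fst ` joint_laurent_values \<alpha> \<beta>"
  unfolding laurent_monoid_def joint_laurent_values_def laurent_eval_def by (auto simp: image_iff; blast)

lemma laurent_eval_extend_support:
  assumes "finite L" "K \<subseteq> L"
  shows "laurent_eval K c x = laurent_eval L (\<lambda>k. if k \<in> K then c k else 0) x"
  unfolding laurent_eval_def using assms by (intro sum.mono_neutral_cong_left) auto

lemma joint_laurent_values_common_support: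
  assumes "(x1, y1) \<in> joint_laurent_values \<alpha> \<beta>" "(x2, y2) \<in> joint_laurent_values \<alpha> \<beta>"
  obtains L c1 c2 where "finite L"
    "x1 = laurent_eval L c1 \<alpha>" "y1 = laurent_eval L c1 \<beta>"
    "x2 = laurent_eval L c2 \<alpha>" "y2 = laurent_eval L c2 \<beta>"
proof -
  obtain K1 c1 K2 c2 where "finite K1" "x1 = laurent_eval K1 c1 \<alpha>" "y1 = laurent_eval K1 c1 \<beta>"
    "finite K2" "x2 = laurent_eval K2 c2 \<alpha>" "y2 = laurent_eval K2 c2 \<beta>"
    using assms unfolding joint_laurent_values_def by auto
  then show ?thesis
    using that[of "K1 \<union> K2" "\<lambda>k. if k \<in> K1 then c1 k else 0" "\<lambda>k. if k \<in> K2 then c2 k else 0"]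
      laurent_eval_extend_support[of "K1 \<union> K2" K1] laurent_eval_extend_support[of "K1 \<union> K2" K2]
    by simp
qed

lemma joint_laurent_values_add:
  assumes "(x1, y1) \<in> joint_laurent_values \<alpha> \<beta>" "(x2, y2) \<in> joint_laurent_values \<alpha> \<beta>"
  shows "(x1 + x2, y1 + y2) \<in> joint_laurent_values \<alpha> \<beta>"
proof -
  obtain L c1 c2 where "finite L"
    "x1 = laurent_eval L c1 \<alpha>" "y1 = laurent_eval L c1 \<beta>"
    "x2 = laurent_eval L c2 \<alpha>" "y2 = laurent_eval L c2 \<beta>"
    using joint_laurent_values_common_support[OF assms] .
  moreover have "laurent_eval L c1 x + laurent_eval L c2 x = laurent_eval L (\<lambda>k. c1 k + c2 k) x" for x
    unfolding laurent_eval_def by (simp add: sum.distrib distrib_right)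
  ultimately show ?thesis
    unfolding joint_laurent_values_def by auto
qed

lemma joint_laurent_values_functional:
  fixes p :: "rat poly"
  assumes "irreducible p" "poly (map_poly of_rat p) \<alpha> = 0" "poly (map_poly of_rat p) \<beta> = 0"
    and "\<alpha> \<noteq> 0" "\<beta> \<noteq> 0"
    and "(x, y1) \<in> joint_laurent_values \<alpha> \<beta>" "(x, y2) \<in> joint_laurent_values \<alpha> \<beta>"
  shows "y1 = y2"
proof -
  obtain L c1 c2 where L: "finite L"
    "x = laurent_eval L c1 \<alpha>" "y1 = laurent_eval L c1 \<beta>"
    "x = laurent_eval L c2 \<alpha>" "y2 = laurent_eval L c2 \<beta>"
    using joint_laurent_values_common_support[OF assms(6,7)] .
  define e where "e k = (of_nat (c1 k) - of_nat (c2 k) :: rat)" for k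
  have difference: "(\<Sum>k\<in>L. of_rat (e k) * z powi k) = laurent_eval L c1 z - laurent_eval L c2 z" for z
    unfolding e_def laurent_eval_def by (simp add: of_rat_diff left_diff_distrib sum_subtractf)
  show ?thesis
    using laurent_vanishes_at_conjugate_root[OF assms(1-5) L(1), of e] difference L by simp
qed

lemma one_le_powi_add_powi:
  fixes a b :: real
  assumes "0 < a" "a < 1" "1 < b"
  shows "1 \<le> a powi k + b powi k"
proof (cases "0 \<le> k")
  case True
  then have "1 \<le> b powi k"
    using assms by simp
  then show ?thesis
    using assms by (simp add: add_increasing)
next
  case False
  then have "1 \<le> a powi k"
    using assms by (simp add: power_int_def power_le_one one_le_inverse)
  then show ?thesis
    using assms by (simp add: add_increasing2)
qed

lemma finite_powi_add_powi_le:
  fixes a b :: real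
  assumes "0 < a" "a < 1" "1 < b"
  shows "finite {k. a powi k + b powi k \<le> T}"
proof -
  have inv_a: "1 < inverse a"
    using assms by (simp add: one_less_inverse)
  obtain m where m: "T < inverse a ^ m"
    using real_arch_pow[OF inv_a] by blast
  obtain n where n: "T < b ^ n"
    using real_arch_pow[OF assms(3)] by blast
  have "k \<in> {- int m..int n}" if "a powi k + b powi k \<le> T" for k
  proof -
    have "a powi k \<le> T" "b powi k \<le> T"
      using that zero_less_power_int[of a k] zero_less_power_int[of b k] assms by linarith+
    show ?thesis
    proof (cases "0 \<le> k")
      case True
      then have "b ^ nat k < b ^ n"
        using \<open>b powi k \<le> T\<close> n by (simp add: power_int_def)
      then show ?thesis
        using True power_strict_increasing_iff[OF assms(3)] by auto
    next
      case False
      then have "inverse a ^ nat (- k) < inverse a ^ m"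
        using \<open>a powi k \<le> T\<close> m unfolding power_int_def by simp
      then show ?thesis
        using False power_strict_increasing_iff[OF inv_a] by auto
    qed
  qed
  then have "{k. a powi k + b powi k \<le> T} \<subseteq> {- int m..int n}"
    by blast
  then show ?thesis
    by (rule finite_subset) simp
qed

lemma laurent_eval_term_le:
  assumes "finite K" "k \<in> K" "0 < \<alpha>" "0 < \<beta>"
  shows "of_nat (c k) * (\<alpha> powi k + \<beta> powi k) \<le> laurent_eval K c \<alpha> + laurent_eval K c \<beta>"
proof -
  have "laurent_eval K c \<alpha> + laurent_eval K c \<beta> = (\<Sum>k\<in>K. of_nat (c k) * (\<alpha> powi k + \<beta> powi k))"
    unfolding laurent_eval_def by (simp add: sum.distrib distrib_left)
  then show ?thesis
    using assms by (auto intro!: member_le_sum add_nonneg_nonneg)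
qed

lemma joint_laurent_values_one_le_add:
  fixes \<alpha> \<beta> :: real
  assumes "(x, y) \<in> joint_laurent_values \<alpha> \<beta>" "x \<noteq> 0" "0 < \<alpha>" "\<alpha> < 1" "1 < \<beta>"
  shows "1 \<le> x + y"
proof -
  obtain K c where K: "finite K" "x = laurent_eval K c \<alpha>" "y = laurent_eval K c \<beta>"
    using assms(1) unfolding joint_laurent_values_def by auto
  then obtain k where k: "k \<in> K" "c k \<noteq> 0"
    using assms(2) unfolding laurent_eval_def by (metis (no_types, lifting) mult_eq_0_iff of_nat_0 sum.neutral)
  have "1 \<le> real (c k)"
    using k(2) by simp
  then have "1 \<le> of_nat (c k) * (\<alpha> powi k + \<beta> powi k)"
    using mult_mono[of 1 "real (c k)" 1 "\<alpha> powi k + \<beta> powi k"] one_le_powi_add_powi[OF assms(3-5)]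
    by simp
  also have "\<dots> \<le> x + y"
    using laurent_eval_term_le[OF K(1) k(1) assms(3)] assms K by simp
  finally show ?thesis .
qed

lemma finite_joint_laurent_values_add_le:
  fixes \<alpha> \<beta> :: real
  assumes "0 < \<alpha>" "\<alpha> < 1" "1 < \<beta>"
  shows "finite {x. \<exists>y. (x, y) \<in> joint_laurent_values \<alpha> \<beta> \<and> x + y \<le> T}"
proof -
  define L where "L = {k. \<alpha> powi k + \<beta> powi k \<le> T}"
  define C where "C = {c. \<forall>k. (k \<in> L \<longrightarrow> c k \<in> {0..nat \<lfloor>T\<rfloor>}) \<and> (k \<notin> L \<longrightarrow> c k = 0)}"
  have "finite L"
    unfolding L_def using finite_powi_add_powi_le[OF assms] .
  have "{x. \<exists>y. (x, y) \<in> joint_laurent_values \<alpha> \<beta> \<and> x + y \<le> T} \<subseteq> (\<lambda>c. laurent_eval L c \<alpha>) ` C"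
  proof safe
    fix x y assume "(x, y) \<in> joint_laurent_values \<alpha> \<beta>" "x + y \<le> T"
    then obtain K c where K: "finite K" "x = laurent_eval K c \<alpha>" "y = laurent_eval K c \<beta>"
      unfolding joint_laurent_values_def by auto
    have support: "k \<in> L \<and> c k \<le> nat \<lfloor>T\<rfloor>" if "k \<in> K" "c k \<noteq> 0" for k
    proof -
      have "of_nat (c k) * (\<alpha> powi k + \<beta> powi k) \<le> T"
        using laurent_eval_term_le[OF K(1) that(1), of \<alpha> \<beta> c] assms K \<open>x + y \<le> T\<close> by simp
      moreover have "1 \<le> real (c k)" "1 \<le> \<alpha> powi k + \<beta> powi k"
        using that one_le_powi_add_powi[OF assms] by auto
      then have "\<alpha> powi k + \<beta> powi k \<le> of_nat (c k) * (\<alpha> powi k + \<beta> powi k)"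
          "real (c k) \<le> of_nat (c k) * (\<alpha> powi k + \<beta> powi k)"
        using mult_right_mono[of 1 "real (c k)" "\<alpha> powi k + \<beta> powi k"]
          mult_left_mono[of 1 "\<alpha> powi k + \<beta> powi k" "real (c k)"] by simp_all
      ultimately have "\<alpha> powi k + \<beta> powi k \<le> T" "real (c k) \<le> T"
        by linarith+
      then show ?thesis
        unfolding L_def by (simp add: le_nat_floor)
    qed
    define c' where "c' k = (if k \<in> K \<inter> L then c k else 0)" for k
    have "x = laurent_eval (K \<inter> L) c \<alpha>"
      unfolding K(2) laurent_eval_def using K(1) support by (intro sum.mono_neutral_right) auto
    also have "\<dots> = laurent_eval L c' \<alpha>"
      unfolding c'_def using laurent_eval_extend_support[OF \<open>finite L\<close>, of "K \<inter> L"] by simp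
    finally have "x = laurent_eval L c' \<alpha>" .
    moreover have "c' \<in> C"
      unfolding c'_def C_def using support by (auto, metis gr0I le0)
    ultimately show "x \<in> (\<lambda>c. laurent_eval L c \<alpha>) ` C"
      by blast
  qed
  moreover have "finite C"
    unfolding C_def using \<open>finite L\<close> by (intro finite_set_of_finite_funs) auto
  ultimately show ?thesis
    using finite_subset by blast
qed

lemma joint_laurent_values_graph:
  fixes p :: "rat poly" and \<alpha> \<beta> :: real
  assumes "irreducible p" "poly (map_poly of_rat p) \<alpha> = 0" "poly (map_poly of_rat p) \<beta> = 0"
    and "\<alpha> \<noteq> 0" "\<beta> \<noteq> 0"
  obtains \<sigma> where "\<And>x y. (x, y) \<in> joint_laurent_values \<alpha> \<beta> \<longleftrightarrow> x \<in> laurent_monoid \<alpha> \<and> y = \<sigma> x"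
proof -
  have M_eq: "laurent_monoid \<alpha> = fst ` joint_laurent_values \<alpha> \<beta>"
    by (rule laurent_monoid_eq_fst_joint_laurent_values)
  then have "\<forall>x\<in>laurent_monoid \<alpha>. \<exists>y. (x, y) \<in> joint_laurent_values \<alpha> \<beta>"
    by force
  then obtain \<sigma> where \<sigma>: "\<And>x. x \<in> laurent_monoid \<alpha> \<Longrightarrow> (x, \<sigma> x) \<in> joint_laurent_values \<alpha> \<beta>"
    by metis
  have "(x, y) \<in> joint_laurent_values \<alpha> \<beta> \<longleftrightarrow> x \<in> laurent_monoid \<alpha> \<and> y = \<sigma> x" for x y
  proof
    assume xy: "(x, y) \<in> joint_laurent_values \<alpha> \<beta>"
    then have "x \<in> laurent_monoid \<alpha>"
      using M_eq by force
    then show "x \<in> laurent_monoid \<alpha> \<and> y = \<sigma> x"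
      using joint_laurent_values_functional[OF assms xy \<sigma>] by blast
  qed (use \<sigma> in blast)
  then show ?thesis
    using that by blast
qed

lemma weighted_real_monoid_laurent_monoid:
  fixes \<alpha> \<beta> :: real
  assumes graph: "\<And>x y. (x, y) \<in> joint_laurent_values \<alpha> \<beta> \<longleftrightarrow> x \<in> laurent_monoid \<alpha> \<and> y = \<sigma> x"
    and "0 < \<alpha>" "\<alpha> < 1" "1 < \<beta>"
  shows "weighted_real_monoid (laurent_monoid \<alpha>) (\<lambda>x. x + \<sigma> x)"
proof
  show "0 \<in> laurent_monoid \<alpha>"
    unfolding laurent_monoid_def by force
next
  fix x y assume "x \<in> laurent_monoid \<alpha>" "y \<in> laurent_monoid \<alpha>"
  then have "(x + y, \<sigma> x + \<sigma> y) \<in> joint_laurent_values \<alpha> \<beta>"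
    using graph joint_laurent_values_add by blast
  then show "x + y \<in> laurent_monoid \<alpha>" and "x + y + \<sigma> (x + y) = x + \<sigma> x + (y + \<sigma> y)"
    using graph by auto
next
  fix x assume "x \<in> laurent_monoid \<alpha>" "x \<noteq> 0"
  then show "1 \<le> x + \<sigma> x"
    using graph joint_laurent_values_one_le_add assms(2-4) by blast
next
  fix T
  have "{x \<in> laurent_monoid \<alpha>. x + \<sigma> x \<le> T} = {x. \<exists>y. (x, y) \<in> joint_laurent_values \<alpha> \<beta> \<and> x + y \<le> T}"
    using graph by auto
  then show "finite {x \<in> laurent_monoid \<alpha>. x + \<sigma> x \<le> T}"
    using finite_joint_laurent_values_add_le[OF assms(2-4)] by simp
qed

theorem theorem4p7:
  fixes p :: "rat poly" and \<alpha>1 \<alpha>2 :: real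
  assumes "degree p = 2" and "irreducible p"
    and "poly (map_poly of_rat p) \<alpha>1 = 0" and "poly (map_poly of_rat p) \<alpha>2 = 0"
    and "0 < \<alpha>1" and "\<alpha>1 < 1" and "1 < \<alpha>2"
  shows "FFM (laurent_monoid \<alpha>1) \<and> ACCP (laurent_monoid \<alpha>1)"
proof -
  have "\<alpha>1 \<noteq> 0" "\<alpha>2 \<noteq> 0"
    using assms(5,7) by auto
  then obtain \<sigma> where "\<And>x y. (x, y) \<in> joint_laurent_values \<alpha>1 \<alpha>2 \<longleftrightarrow> x \<in> laurent_monoid \<alpha>1 \<and> y = \<sigma> x"
    using joint_laurent_values_graph[OF assms(2-4)] by blast
  then interpret weighted_real_monoid "laurent_monoid \<alpha>1" "\<lambda>x. x + \<sigma> x"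
    using weighted_real_monoid_laurent_monoid assms(5-7) by blast
  show ?thesis
    using FFM ACCP by blast
qed

end
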